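(* Let $(\mathbf{X},\mathcal{F},\mu)$ be a probability space with a reflexive symmetric relation $\approx$ such that $D(x)=\{y:y\approx x\}\in\mathcal{F}$ for all $x$ and $\inf_{x\in\mathbf{X}}\mu(D(x))>0$. Let $\Omega=\{\Omega_1,\dots,\Omega_m\}$ be a partition of $\mathbf{X}$ into measurable sets with $\mu(\Omega_i)>0$ such that $x\approx y$ implies $x,y$ lie in the same $\Omega_i$; for $x\in\mathbf{X}$ let $i(x)$ be the index with $x\in\Omega_{i(x)}$, and set $\bar k(\Omega)=\sup_{x\in\mathbf{X}}\mu(\Omega_{i(x)})/\mu(D(x))$. Let $R=\{R_1,\dots,R_m\}$ be a measurable partition of $\mathbf{X}$ with label function $\ell(x)=c$ iff $x\in R_c$, and recall rates $\rho_i=\mu(R_i\cap\Omega_i)/\mu(\Omega_i)$. If $\rho_i\geq\underline\rho$ for all $i$, where $(1-\underline\rho)\,\bar k(\Omega)<1$, then every misclassified input $x$ (i.e. $\ell(x)\neq i(x)$) satisfies $\mu(D(x)\setminus R_{\ell(x)})>0$; in particular there exists $y\approx x$ with $\ell(y)\neq\ell(x)$.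
   Context: A classifier has hyper-sensitive behavior if every misclassified input is an adversarial Doppelgänger, i.e. has some $y\approx x$ with a different label. *)

theory Defs
  imports "HOL-Probability.Probability"
begin

definition dset :: "'a measure \<Rightarrow> ('a \<Rightarrow> 'a \<Rightarrow> bool) \<Rightarrow> 'a \<Rightarrow> 'a set" where
  "dset M rel x = {y \<in> space M. rel y x}"

definition cell_index :: "nat \<Rightarrow> (nat \<Rightarrow> 'a set) \<Rightarrow> 'a \<Rightarrow> nat" where
  "cell_index m P x = (THE i. i \<in> {1..m} \<and> x \<in> P i)"

definition kbar :: "'a measure \<Rightarrow> ('a \<Rightarrow> 'a \<Rightarrow> bool) \<Rightarrow> nat \<Rightarrow> (nat \<Rightarrow> 'a set) \<Rightarrow> real" where
  "kbar M rel m Om =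
     (SUP x\<in>space M. measure M (Om (cell_index m Om x)) / measure M (dset M rel x))"

definition recall :: "'a measure \<Rightarrow> (nat \<Rightarrow> 'a set) \<Rightarrow> (nat \<Rightarrow> 'a set) \<Rightarrow> nat \<Rightarrow> real" where
  "recall M R Om i = measure M (R i \<inter> Om i) / measure M (Om i)"

end

theory Submission
  imports Defs
begin

text \<open>Let \<open>x\<close> lie in the cell \<open>\<Omega>\<^sub>i\<close> but carry a label \<open>c \<noteq> i\<close>. Its Doppelgaenger set \<open>D(x)\<close> lies
  inside \<open>\<Omega>\<^sub>i\<close>, so the part of \<open>D(x)\<close> labelled \<open>c\<close> lies in \<open>\<Omega>\<^sub>i \<setminus> R\<^sub>i\<close>, whose measure is at most
  \<open>(1 - \<rho>) \<mu>(\<Omega>\<^sub>i) \<le> (1 - \<rho>) kbar(\<Omega>) \<mu>(D(x)) < \<mu>(D(x))\<close>. Hence a set of positive measure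
  in \<open>D(x)\<close> is labelled differently from \<open>x\<close>.\<close>

lemma cell_index_eq:
  assumes disj: "\<And>i j. i \<in> {1..m} \<Longrightarrow> j \<in> {1..m} \<Longrightarrow> i \<noteq> j \<Longrightarrow> P i \<inter> P j = {}"
    and "j \<in> {1..m}" "x \<in> P j"
  shows "cell_index m P x = j"
  unfolding cell_index_def using assms by (intro the_equality) blast+

lemma cell_index_mem:
  assumes disj: "\<And>i j. i \<in> {1..m} \<Longrightarrow> j \<in> {1..m} \<Longrightarrow> i \<noteq> j \<Longrightarrow> P i \<inter> P j = {}"
    and cover: "(\<Union>i\<in>{1..m}. P i) = S" and "x \<in> S"
  shows "cell_index m P x \<in> {1..m}" "x \<in> P (cell_index m P x)"
proof -
  obtain j where "j \<in> {1..m}" "x \<in> P j" using cover \<open>x \<in> S\<close> by blast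
  with cell_index_eq[OF disj] show "cell_index m P x \<in> {1..m}" "x \<in> P (cell_index m P x)"
    by simp_all
qed

lemma dset_subset_cell:
  assumes compat: "\<And>y. y \<in> space M \<Longrightarrow> rel y x \<Longrightarrow> (y \<in> A \<longleftrightarrow> x \<in> A)" and "x \<in> A"
  shows "dset M rel x \<subseteq> A"
  using assms by (auto simp: dset_def)

lemma measure_dset_pos:
  assumes "(INF x\<in>space M. measure M (dset M rel x)) > 0" "x \<in> space M"
  shows "measure M (dset M rel x) > 0"
proof -
  have "(INF x\<in>space M. measure M (dset M rel x)) \<le> measure M (dset M rel x)"
    by (rule cINF_lower[OF _ assms(2)]) (auto intro: bdd_belowI[of _ 0])
  with assms(1) show ?thesis by linarith
qed

lemma mult_lt_of_divide_le:
  fixes a d k \<rho> :: real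
  assumes "d > 0" "a \<ge> 0" "a / d \<le> k" "(1 - \<rho>) * k < 1"
  shows "(1 - \<rho>) * a < d"
proof (cases "\<rho> < 1")
  case True
  then have "(1 - \<rho>) * (a / d) \<le> (1 - \<rho>) * k"
    using assms(3) by (intro mult_left_mono) auto
  with assms(4) have "(1 - \<rho>) * (a / d) < 1" by linarith
  then have "(1 - \<rho>) * a / d < 1" by (simp only: times_divide_eq_right)
  with assms(1) show ?thesis by (simp add: pos_divide_less_eq)
next
  case False
  then have "(1 - \<rho>) * a \<le> 0" using assms(2) by (simp add: mult_nonpos_nonneg)
  with assms(1) show ?thesis by linarith
qed

context finite_measure
begin

lemma measure_cell_ratio_le_kbar:
  assumes inf_pos: "(INF x\<in>space M. measure M (dset M rel x)) > 0" and x: "x \<in> space M"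
  shows "measure M (Om (cell_index m Om x)) / measure M (dset M rel x) \<le> kbar M rel m Om"
  unfolding kbar_def
proof (rule cSUP_upper[OF x], rule bdd_aboveI)
  let ?I = "INF x\<in>space M. measure M (dset M rel x)"
  fix r assume "r \<in> (\<lambda>x. measure M (Om (cell_index m Om x)) / measure M (dset M rel x)) ` space M"
  then obtain z where z: "z \<in> space M"
    and r: "r = measure M (Om (cell_index m Om z)) / measure M (dset M rel z)" by auto
  have "?I \<le> measure M (dset M rel z)"
    by (rule cINF_lower[OF _ z]) (auto intro: bdd_belowI[of _ 0])
  then show "r \<le> measure M (space M) / ?I"
    unfolding r using inf_pos by (intro frac_le) (auto simp: bounded_measure)
qed

lemma measure_cell_Diff_le_recall:
  assumes "Om i \<in> sets M" "R i \<in> sets M" "measure M (Om i) > 0" "recall M R Om i \<ge> \<rho>"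
  shows "measure M (Om i - R i) \<le> (1 - \<rho>) * measure M (Om i)"
proof -
  have "\<rho> * measure M (Om i) \<le> measure M (R i \<inter> Om i)"
    using assms(3,4) by (simp add: recall_def pos_le_divide_eq)
  moreover have "measure M (Om i - R i) = measure M (Om i) - measure M (R i \<inter> Om i)"
    using finite_measure_Diff'[OF assms(1,2)] by (simp add: Int_commute)
  ultimately show ?thesis by (simp add: algebra_simps)
qed

lemma measure_Diff_pos_of_small_error:
  assumes sets: "D \<in> sets M" "Rc \<in> sets M" "Ri \<in> sets M" "A \<in> sets M"
    and "D \<subseteq> A" "Rc \<inter> Ri = {}" and "measure M (A - Ri) < measure M D"
  shows "measure M (D - Rc) > 0"
proof -
  have "measure M (D \<inter> Rc) \<le> measure M (A - Ri)"
    using assms by (intro finite_measure_mono) auto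
  moreover have "measure M (D - Rc) = measure M D - measure M (D \<inter> Rc)"
    using finite_measure_Diff'[OF sets(1,2)] .
  ultimately show ?thesis using assms(7) by linarith
qed

end

theorem mainTheorem14:
  fixes M :: "'a measure" and rel :: "'a \<Rightarrow> 'a \<Rightarrow> bool"
    and m :: nat and Om R :: "nat \<Rightarrow> 'a set" and rho_low :: real
  assumes "prob_space M"
    and refl: "\<And>x. x \<in> space M \<Longrightarrow> rel x x"
    and sym: "\<And>x y. rel x y \<Longrightarrow> rel y x"
    and D_meas: "\<And>x. x \<in> space M \<Longrightarrow> dset M rel x \<in> sets M"
    and D_inf: "(INF x\<in>space M. measure M (dset M rel x)) > 0"
    and Om_meas: "\<And>i. i \<in> {1..m} \<Longrightarrow> Om i \<in> sets M"
    and Om_pos: "\<And>i. i \<in> {1..m} \<Longrightarrow> measure M (Om i) > 0"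
    and Om_disj: "\<And>i j. i \<in> {1..m} \<Longrightarrow> j \<in> {1..m} \<Longrightarrow> i \<noteq> j \<Longrightarrow> Om i \<inter> Om j = {}"
    and Om_cover: "(\<Union>i\<in>{1..m}. Om i) = space M"
    and Om_compat: "\<And>x y i. x \<in> space M \<Longrightarrow> y \<in> space M \<Longrightarrow> rel x y \<Longrightarrow> i \<in> {1..m} \<Longrightarrow>
                      (x \<in> Om i \<longleftrightarrow> y \<in> Om i)"
    and R_meas: "\<And>i. i \<in> {1..m} \<Longrightarrow> R i \<in> sets M"
    and R_disj: "\<And>i j. i \<in> {1..m} \<Longrightarrow> j \<in> {1..m} \<Longrightarrow> i \<noteq> j \<Longrightarrow> R i \<inter> R j = {}"
    and R_cover: "(\<Union>i\<in>{1..m}. R i) = space M"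
    and rho: "\<And>i. i \<in> {1..m} \<Longrightarrow> recall M R Om i \<ge> rho_low"
    and small: "(1 - rho_low) * kbar M rel m Om < 1"
  shows "\<forall>x\<in>space M. cell_index m R x \<noteq> cell_index m Om x \<longrightarrow>
           measure M (dset M rel x - R (cell_index m R x)) > 0 \<and>
           (\<exists>y\<in>space M. rel y x \<and> cell_index m R y \<noteq> cell_index m R x)"
proof (intro ballI impI)
  interpret prob_space M by fact
  fix x assume x: "x \<in> space M" and mis: "cell_index m R x \<noteq> cell_index m Om x"
  define c i D where "c = cell_index m R x" and "i = cell_index m Om x" and "D = dset M rel x"
  note c = cell_index_mem[where P = R, OF R_disj R_cover x, folded c_def]
  note i = cell_index_mem[where P = Om, OF Om_disj Om_cover x, folded i_def]
  have "D \<in> sets M" unfolding D_def by (rule D_meas[OF x])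
  have "D \<subseteq> Om i"
    unfolding D_def by (rule dset_subset_cell) (use Om_compat[OF _ x _ i(1)] i(2) in auto)
  have "R c \<inter> R i = {}" using R_disj[OF c(1) i(1)] mis by (simp add: c_def i_def)
  have "measure M (Om i - R i) \<le> (1 - rho_low) * measure M (Om i)"
    using Om_meas[OF i(1)] R_meas[OF i(1)] Om_pos[OF i(1)] rho[OF i(1)]
    by (rule measure_cell_Diff_le_recall)
  also have "\<dots> < measure M D"
  proof (rule mult_lt_of_divide_le[OF _ measure_nonneg _ small])
    show "measure M D > 0" unfolding D_def by (rule measure_dset_pos[OF D_inf x])
    show "measure M (Om i) / measure M D \<le> kbar M rel m Om"
      unfolding D_def i_def by (rule measure_cell_ratio_le_kbar[OF D_inf x])
  qed
  finally have pos: "measure M (D - R c) > 0"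
    using \<open>D \<in> sets M\<close> R_meas[OF c(1)] R_meas[OF i(1)] Om_meas[OF i(1)] \<open>D \<subseteq> Om i\<close>
      \<open>R c \<inter> R i = {}\<close>
    by (intro measure_Diff_pos_of_small_error)
  then have "D - R c \<noteq> {}" by (metis less_irrefl measure_empty)
  then obtain y where "y \<in> D" "y \<notin> R c" by blast
  then have "y \<in> space M" "rel y x" "cell_index m R y \<noteq> c"
    using cell_index_mem(2)[where P = R, OF R_disj R_cover] by (auto simp: D_def dset_def)
  with pos show "measure M (dset M rel x - R (cell_index m R x)) > 0 \<and>
      (\<exists>y\<in>space M. rel y x \<and> cell_index m R y \<noteq> cell_index m R x)"
    unfolding D_def c_def by blast
qed

end
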